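(* Let $\mathcal{D}$ be any basic action theory (including (P1), (P2) and $(\star)$) with a sensing action $\mathit{obs}(z)$ sensing the fluent $f$, with likelihood axiom $l(\mathit{obs}(z),s) = u \equiv u = \mathit{Err}(z,f(s))$ and precondition axiom $\mathit{Poss}(\mathit{obs}(z),s)\equiv \mathit{true}$, where $\mathit{Err}(u_1,u_2)$ is an expression with only two free (numeric) variables, and where $\mathit{obs}(z)$ does not change the value of any fluent (it appears in no successor state axiom of any fluent). Let $\phi$ be any $\mathcal{L}$-formula mentioning only $f$, and let $u$ be the variable among $\vec x = (x_1,\ldots,x_n)$ corresponding to the values of $f$. Then $$\mathcal{D} \models \textit{Bel}(\phi, do(\mathit{obs}(z),S_0)) = \frac{\int_{\vec x}[P(\vec x,\phi\land f=u,S_0)\times \mathit{Err}(z,u)]}{\int_{\vec x}[P(\vec x, f=u, S_0)\times \mathit{Err}(z,u)]}.$$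
   Context: Situation calculus: a many-sorted language $\mathcal{L}$ with sorts action, situation, object; $do(a,s)$ is the successor of $s$ under action $a$, $do(\alpha,s)$ for a sequence $\alpha$ is iterated $do$; $S_0$ the actual initial situation; $\mathit{Init}(s) \doteq \neg\exists a,s'.\, s = do(a,s')$; $\iota$ ranges over initial situations. The fluents $f_1,\ldots,f_n$ (one of which is $f$) are all the fluents, take only a situation argument, and take values in $\mathbb{R}$; $i$ ranges over $1..n$. $\phi[s]$ restores situation argument $s$ in situation-suppressed $\phi$. $\langle z.\ \psi \to t\rangle = v$ abbreviates $[(\exists z\psi)\supset \forall z(\psi \supset v = t)] \land [(\neg\exists z\psi) \supset v = 0]$. Distinguished symbols: $\mathit{Poss}(a,s)$, $p(s',s)$ (density of $s'$ when in $s$), $l(a,s)$ (likelihood). A basic action theory consists of an initial theory containing (P1) $\forall \iota,s.\ p(s,\iota) \ge 0 \land (p(s,\iota) > 0 \supset \mathit{Init}(s))$ and $(\star)$ $[\forall \vec x\, \exists \iota \bigwedge_i f_i(\iota) = x_i] \land [\forall \iota,\iota'.\ \bigwedge_i f_i(\iota) = f_i(\iota') \supset \iota = \iota']$; precondition axioms; successor state axioms including (P2) $p(s',do(a,s)) = v \equiv \exists s''[s' = do(a,s'') \land \mathit{Poss}(a,s'') \land v = p(s'',s)\times l(a,s'')] \lor \neg\exists s''[s'=do(a,s'')\land \mathit{Poss}(a,s'')] \land v = 0$; likelihood axioms $l(A(\vec y),s)=v\equiv\psi_A(\vec y,v,s)$; foundational axioms. For a ground action sequence $\alpha$, $P(\vec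 x,\phi,do(\alpha,S_0)) \doteq \langle \iota.\ \bigwedge_i f_i(\iota) = x_i \land \phi[do(\alpha,\iota)] \to p(do(\alpha,\iota),do(\alpha,S_0))\rangle$ (with $\alpha$ empty giving $P(\vec x,\phi,S_0)$), and $\textit{Bel}(\phi,s) \doteq \frac{1}{\gamma}\int_{\vec x} P(\vec x,\phi,s)$ with $\gamma$ the numerator with $\phi$ replaced by $\mathit{true}$. Here $\int_{\vec x}$ is the logical abbreviation of the improper Riemann integral over $\mathbb{R}^n$ (built from second-order-defined finite sums and $\epsilon$-style limit formulas), and entailment is over $\mathbb{R}$-interpretations (structures where arithmetic, $e$, $\pi$, exponentiation and logarithms have their usual meaning over the reals). *)

theory Defs
  imports Complex_Main
begin

text \<open>Standard model of the foundational axioms: a situation is an initial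
  situation together with the finite sequence of actions performed since.\<close>
type_synonym ('i, 'a) sit = "'i \<times> 'a list"

definition do_sit :: "'a \<Rightarrow> ('i, 'a) sit \<Rightarrow> ('i, 'a) sit" where
  "do_sit a s = (fst s, snd s @ [a])"

definition do_seq :: "'a list \<Rightarrow> ('i, 'a) sit \<Rightarrow> ('i, 'a) sit" where
  "do_seq \<alpha> s = foldl (\<lambda>s a. do_sit a s) s \<alpha>"

definition Init :: "('i, 'a) sit \<Rightarrow> bool" where
  "Init s \<longleftrightarrow> \<not> (\<exists>a s'. s = do_sit a s')"

definition isit :: "'i \<Rightarrow> ('i, 'a) sit" where
  "isit \<iota> = (\<iota>, [])"

definition cond_term :: "('z \<Rightarrow> bool) \<Rightarrow> ('z \<Rightarrow> real) \<Rightarrow> real" where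
  "cond_term \<psi> t = (if \<exists>z. \<psi> z then (THE v. \<forall>z. \<psi> z \<longrightarrow> v = t z) else 0)"

text \<open>P(x, phi, do(alpha,S0)); fluents are F 0, ..., F (n-1), the vector x is
  read on indices 0..n-1, phi is a predicate on situations (phi[s]).\<close>
definition Pdens :: "nat \<Rightarrow> (nat \<Rightarrow> ('i, 'a) sit \<Rightarrow> real) \<Rightarrow> (('i, 'a) sit \<Rightarrow> ('i, 'a) sit \<Rightarrow> real)
    \<Rightarrow> (nat \<Rightarrow> real) \<Rightarrow> (('i, 'a) sit \<Rightarrow> bool) \<Rightarrow> 'a list \<Rightarrow> 'i \<Rightarrow> real" where
  "Pdens n F p x \<phi> \<alpha> S0 =
     cond_term (\<lambda>\<iota>. (\<forall>i<n. F i (isit \<iota>) = x i) \<and> \<phi> (do_seq \<alpha> (isit \<iota>)))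
               (\<lambda>\<iota>. p (do_seq \<alpha> (isit \<iota>)) (do_seq \<alpha> (isit S0)))"

definition riemann_int :: "(real \<Rightarrow> real) \<Rightarrow> real \<Rightarrow> real \<Rightarrow> real" where
  "riemann_int h a b =
     lim (\<lambda>N. let d = (b - a) / real (Suc N) in \<Sum>k=1..Suc N. d * h (a + real k * d))"

definition improper_int :: "(real \<Rightarrow> real) \<Rightarrow> real" where
  "improper_int h = Lim at_bot (\<lambda>u. Lim at_top (\<lambda>v. riemann_int h u v))"

fun int_vars :: "nat list \<Rightarrow> ((nat \<Rightarrow> real) \<Rightarrow> real) \<Rightarrow> (nat \<Rightarrow> real) \<Rightarrow> real" where
  "int_vars [] g x = g x"
| "int_vars (i # is) g x = improper_int (\<lambda>t. int_vars is g (x(i := t)))"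

definition int_vec :: "nat \<Rightarrow> ((nat \<Rightarrow> real) \<Rightarrow> real) \<Rightarrow> real" where
  "int_vec n g = int_vars [0..<n] g (\<lambda>_. 0)"

definition Bel :: "nat \<Rightarrow> (nat \<Rightarrow> ('i, 'a) sit \<Rightarrow> real) \<Rightarrow> (('i, 'a) sit \<Rightarrow> ('i, 'a) sit \<Rightarrow> real)
    \<Rightarrow> (('i, 'a) sit \<Rightarrow> bool) \<Rightarrow> 'a list \<Rightarrow> 'i \<Rightarrow> real" where
  "Bel n F p \<phi> \<alpha> S0 =
     (1 / int_vec n (\<lambda>x. Pdens n F p x (\<lambda>_. True) \<alpha> S0)) * int_vec n (\<lambda>x. Pdens n F p x \<phi> \<alpha> S0)"

end

theory Submission
  imports Defs
begin

text \<open>Condition \<open>(\<star>)\<close> makes the initial situation with given fluent values \<open>x\<close> unique, so every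
  density \<open>P(x, \<phi>, s)\<close> is a single value of \<open>p\<close> rather than a genuine conditional term. After
  a sensing action that is always possible and changes no fluent, (P2) multiplies that value
  by the likelihood \<open>Err(z, f)\<close>, where \<open>f = x\<^sub>k\<close> at that initial situation, and leaves \<open>\<phi>\<close>
  unaffected. Hence the integrands of \<open>Bel\<close> after \<open>obs(z)\<close> coincide pointwise with those on
  the right-hand side.\<close>

lemma cond_term_conj_unique:
  assumes "\<And>\<iota>. A \<iota> \<longleftrightarrow> \<iota> = \<iota>\<^sub>0"
  shows "cond_term (\<lambda>\<iota>. A \<iota> \<and> R \<iota>) t = (if R \<iota>\<^sub>0 then t \<iota>\<^sub>0 else 0)"
proof (cases "R \<iota>\<^sub>0")
  case True
  have "(THE v. \<forall>\<iota>. A \<iota> \<and> R \<iota> \<longrightarrow> v = t \<iota>) = t \<iota>\<^sub>0"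
    by (rule the_equality) (use assms True in auto)
  with True assms show ?thesis
    unfolding cond_term_def by auto
next
  case False
  with assms show ?thesis
    unfolding cond_term_def by auto
qed

lemma initial_of_fluent_values:
  assumes "(\<forall>x. \<exists>\<iota>. \<forall>i<n. F i (isit \<iota>) = x i)
           \<and> (\<forall>\<iota> \<iota>'. (\<forall>i<n. F i (isit \<iota>) = F i (isit \<iota>')) \<longrightarrow> \<iota> = \<iota>')"
  obtains \<iota>\<^sub>0 where "\<And>\<iota>. (\<forall>i<n. F i (isit \<iota>) = x i) \<longleftrightarrow> \<iota> = \<iota>\<^sub>0"
proof -
  obtain \<iota>\<^sub>0 where \<iota>\<^sub>0: "\<forall>i<n. F i (isit \<iota>\<^sub>0) = x i"
    using assms by blast
  have "(\<forall>i<n. F i (isit \<iota>) = x i) \<longleftrightarrow> \<iota> = \<iota>\<^sub>0" for \<iota>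
  proof
    assume "\<forall>i<n. F i (isit \<iota>) = x i"
    with \<iota>\<^sub>0 have "\<forall>i<n. F i (isit \<iota>) = F i (isit \<iota>\<^sub>0)"
      by simp
    with assms show "\<iota> = \<iota>\<^sub>0"
      by blast
  qed (use \<iota>\<^sub>0 in simp)
  then show thesis
    by (rule that)
qed

lemma Pdens_unique_initial:
  assumes "\<And>\<iota>. (\<forall>i<n. F i (isit \<iota>) = x i) \<longleftrightarrow> \<iota> = \<iota>\<^sub>0"
  shows "Pdens n F p x \<phi> \<alpha> S0 =
           (if \<phi> (do_seq \<alpha> (isit \<iota>\<^sub>0)) then p (do_seq \<alpha> (isit \<iota>\<^sub>0)) (do_seq \<alpha> (isit S0)) else 0)"
  unfolding Pdens_def by (rule cond_term_conj_unique[OF assms])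

lemma p_do_sit_Poss:
  assumes P2: "\<forall>s' a s v. (p s' (do_sit a s) = v) \<longleftrightarrow>
                 ((\<exists>s''. s' = do_sit a s'' \<and> Poss a s'' \<and> v = p s'' s * l a s'')
                  \<or> (\<not> (\<exists>s''. s' = do_sit a s'' \<and> Poss a s'') \<and> v = 0))"
    and "Poss a s"
  shows "p (do_sit a s) (do_sit a s') = p s s' * l a s"
  using P2[rule_format, of "do_sit a s" a s' "p s s' * l a s"] assms(2) by blast

lemma Pdens_after_sensing:
  assumes "k < n"
    and star: "(\<forall>x. \<exists>\<iota>. \<forall>i<n. F i (isit \<iota>) = x i)
               \<and> (\<forall>\<iota> \<iota>'. (\<forall>i<n. F i (isit \<iota>) = F i (isit \<iota>')) \<longrightarrow> \<iota> = \<iota>')"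
    and P2: "\<forall>s' a s v. (p s' (do_sit a s) = v) \<longleftrightarrow>
               ((\<exists>s''. s' = do_sit a s'' \<and> Poss a s'' \<and> v = p s'' s * l a s'')
                \<or> (\<not> (\<exists>s''. s' = do_sit a s'' \<and> Poss a s'') \<and> v = 0))"
    and lik: "\<And>s. l a s = g (F k s)"
    and poss: "\<And>s. Poss a s"
    and sensed_unchanged: "\<And>s. F k (do_sit a s) = F k s"
    and \<phi>_unchanged: "\<And>s. \<phi> (do_sit a s) \<longleftrightarrow> \<phi> s"
  shows "Pdens n F p x \<phi> [a] S0 = Pdens n F p x (\<lambda>s. \<phi> s \<and> F k s = x k) [] S0 * g (x k)"
proof -
  obtain \<iota>\<^sub>0 where \<iota>\<^sub>0: "\<And>\<iota>. (\<forall>i<n. F i (isit \<iota>) = x i) \<longleftrightarrow> \<iota> = \<iota>\<^sub>0"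
    using initial_of_fluent_values[OF star] by blast
  have "F k (isit \<iota>\<^sub>0) = x k"
    using \<iota>\<^sub>0 \<open>k < n\<close> by blast
  moreover have "p (do_sit a (isit \<iota>\<^sub>0)) (do_sit a (isit S0)) = p (isit \<iota>\<^sub>0) (isit S0) * g (x k)"
    using p_do_sit_Poss[OF P2 poss] lik calculation by simp
  ultimately show ?thesis
    by (simp add: Pdens_unique_initial[OF \<iota>\<^sub>0] do_seq_def \<phi>_unchanged)
qed

theorem mainTheorem12:
  fixes n k :: nat
    and F :: "nat \<Rightarrow> ('i, 'a) sit \<Rightarrow> real"
    and p :: "('i, 'a) sit \<Rightarrow> ('i, 'a) sit \<Rightarrow> real"
    and l :: "'a \<Rightarrow> ('i, 'a) sit \<Rightarrow> real"
    and Poss :: "'a \<Rightarrow> ('i, 'a) sit \<Rightarrow> bool"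
    and obs :: "real \<Rightarrow> 'a"
    and Err :: "real \<Rightarrow> real \<Rightarrow> real"
    and Q :: "real \<Rightarrow> bool"
    and S0 :: 'i
    and z :: real
  assumes f_idx: "k < n"
    and P1: "\<forall>\<iota> s. p s (isit \<iota>) \<ge> 0 \<and> (p s (isit \<iota>) > 0 \<longrightarrow> Init s)"
    and star: "(\<forall>x. \<exists>\<iota>. \<forall>i<n. F i (isit \<iota>) = x i)
               \<and> (\<forall>\<iota> \<iota>'. (\<forall>i<n. F i (isit \<iota>) = F i (isit \<iota>')) \<longrightarrow> \<iota> = \<iota>')"
    and P2: "\<forall>s' a s v. (p s' (do_sit a s) = v) \<longleftrightarrow>
               ((\<exists>s''. s' = do_sit a s'' \<and> Poss a s'' \<and> v = p s'' s * l a s'')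
                \<or> (\<not> (\<exists>s''. s' = do_sit a s'' \<and> Poss a s'') \<and> v = 0))"
    and lik_obs: "\<forall>z s u. (l (obs z) s = u) \<longleftrightarrow> u = Err z (F k s)"
    and poss_obs: "\<forall>z s. Poss (obs z) s"
    and ssa_obs: "\<forall>i<n. \<forall>z s. F i (do_sit (obs z) s) = F i s"
    and una_obs: "inj obs"
  shows "Bel n F p (\<lambda>s. Q (F k s)) [obs z] S0 =
           int_vec n (\<lambda>x. Pdens n F p x (\<lambda>s. Q (F k s) \<and> F k s = x k) [] S0 * Err z (x k))
         / int_vec n (\<lambda>x. Pdens n F p x (\<lambda>s. F k s = x k) [] S0 * Err z (x k))"
proof -
  have lik: "l (obs z) s = Err z (F k s)" for s
    using lik_obs by blast
  have sensed_unchanged: "F k (do_sit (obs z) s) = F k s" for s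
    using ssa_obs f_idx by blast
  note after_obs = Pdens_after_sensing[where n = n and k = k and F = F and a = "obs z" and g = "Err z",
      OF f_idx star P2 lik poss_obs[rule_format, of z] sensed_unchanged]
  have "Pdens n F p x (\<lambda>s. Q (F k s)) [obs z] S0 =
          Pdens n F p x (\<lambda>s. Q (F k s) \<and> F k s = x k) [] S0 * Err z (x k)" for x
    by (rule after_obs) (simp add: sensed_unchanged)
  moreover have "Pdens n F p x (\<lambda>_. True) [obs z] S0 =
                   Pdens n F p x (\<lambda>s. F k s = x k) [] S0 * Err z (x k)" for x
    using after_obs[of "\<lambda>_. True"] by simp
  ultimately show ?thesis
    unfolding Bel_def by simp
qed

end
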